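(* Let $x\cdot y$ be a PA-structure on $(\mathfrak{g},\mathfrak{n})$, where $\mathfrak{g}$ and $\mathfrak{n}$ are $2$-step nilpotent. Then $x\circ y=\frac12(x\cdot y+y\cdot x)$ defines a CPA-structure on $\mathfrak{n}$ if and only if, for all $x,y\in V$, $$[\mathrm{ad}(x),\mathrm{Ad}(y)]=\mathrm{Ad}([x,y])$$ and $$L(\{x,y\})-L([x,y])=\tfrac12\bigl(\mathrm{ad}(\{x,y\})+[\mathrm{ad}(y),L(x)]+[L(y),\mathrm{ad}(x)]\bigr).$$
   Context: Let $K$ be a field of characteristic zero and $V$ a finite-dimensional vector space over $K$. Let $\mathfrak{g}=(V,[\,,])$ and $\mathfrak{n}=(V,\{\,,\})$ be two Lie algebra structures on $V$. A post-Lie algebra structure (PA-structure) on the pair $(\mathfrak{g},\mathfrak{n})$ is a $K$-bilinear product $x\cdot y$ on $V$ satisfying, for all $x,y,z\in V$: (i) $x\cdot y-y\cdot x=[x,y]-\{x,y\}$; (ii) $[x,y]\cdot z=x\cdot(y\cdot z)-y\cdot(x\cdot z)$; (iii) $x\cdot\{y,z\}=\{x\cdot y,z\}+\{y,x\cdot z\}$. Write $L(x)(y)=x\cdot y$, $\mathrm{ad}(x)(y)=[x,y]$, $\mathrm{Ad}(x)(y)=\{x,y\}$; brackets of operators are commutators in $\mathrm{End}(V)$. A commutative post-Lie algebra structure (CPA-structure) on the Lie algebra $\mathfrak{n}=(V,\{\,,\})$ is a bilinear product $x\circ y$ on $V$ with $x\circ y=y\circ x$, $\{x,y\}\circ z=x\circ(y\circ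 z)-y\circ(x\circ z)$, and $x\circ\{y,z\}=\{x\circ y,z\}+\{y,x\circ z\}$ for all $x,y,z$. A Lie algebra is called $2$-step nilpotent here if it is nilpotent of class at most $2$. *)

theory Defs
  imports Main "HOL.Vector_Spaces"
begin

definition bilinear_prod :: "('k::field \<Rightarrow> 'v::ab_group_add \<Rightarrow> 'v) \<Rightarrow> ('v \<Rightarrow> 'v \<Rightarrow> 'v) \<Rightarrow> bool" where
  "bilinear_prod scale p \<longleftrightarrow>
     (\<forall>x y z. p (x + y) z = p x z + p y z) \<and>
     (\<forall>x y z. p x (y + z) = p x y + p x z) \<and>
     (\<forall>a x y. p (scale a x) y = scale a (p x y)) \<and>
     (\<forall>a x y. p x (scale a y) = scale a (p x y))"

definition lie_algebra :: "('k::field \<Rightarrow> 'v::ab_group_add \<Rightarrow> 'v) \<Rightarrow> ('v \<Rightarrow> 'v \<Rightarrow> 'v) \<Rightarrow> bool" where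
  "lie_algebra scale br \<longleftrightarrow>
     bilinear_prod scale br \<and>
     (\<forall>x. br x x = 0) \<and>
     (\<forall>x y z. br x (br y z) + br y (br z x) + br z (br x y) = 0)"

definition two_step_nilpotent :: "('v::ab_group_add \<Rightarrow> 'v \<Rightarrow> 'v) \<Rightarrow> bool" where
  "two_step_nilpotent br \<longleftrightarrow> (\<forall>x y z. br (br x y) z = 0)"

definition op_comm :: "('v::ab_group_add \<Rightarrow> 'v) \<Rightarrow> ('v \<Rightarrow> 'v) \<Rightarrow> 'v \<Rightarrow> 'v" where
  "op_comm f g = (\<lambda>v. f (g v) - g (f v))"

text \<open>Post-Lie algebra structure on the pair (g, n): g has bracket bg, n has bracket bn.\<close>
definition PA_structure :: "('k::field \<Rightarrow> 'v::ab_group_add \<Rightarrow> 'v) \<Rightarrow> ('v \<Rightarrow> 'v \<Rightarrow> 'v) \<Rightarrow> ('v \<Rightarrow> 'v \<Rightarrow> 'v) \<Rightarrow> ('v \<Rightarrow> 'v \<Rightarrow> 'v) \<Rightarrow> bool" where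
  "PA_structure scale bg bn p \<longleftrightarrow>
     bilinear_prod scale p \<and>
     (\<forall>x y. p x y - p y x = bg x y - bn x y) \<and>
     (\<forall>x y z. p (bg x y) z = p x (p y z) - p y (p x z)) \<and>
     (\<forall>x y z. p x (bn y z) = bn (p x y) z + bn y (p x z))"

definition CPA_structure :: "('k::field \<Rightarrow> 'v::ab_group_add \<Rightarrow> 'v) \<Rightarrow> ('v \<Rightarrow> 'v \<Rightarrow> 'v) \<Rightarrow> ('v \<Rightarrow> 'v \<Rightarrow> 'v) \<Rightarrow> bool" where
  "CPA_structure scale bn c \<longleftrightarrow>
     bilinear_prod scale c \<and>
     (\<forall>x y. c x y = c y x) \<and>
     (\<forall>x y z. c (bn x y) z = c x (c y z) - c y (c x z)) \<and>
     (\<forall>x y z. c x (bn y z) = bn (c x y) z + bn y (c x z))"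

end

theory Submission
  imports Defs
begin

text \<open>
  Put \<open>x \<circ> y = (x \<cdot> y + y \<cdot> x)/2\<close>; axiom (i) turns this into
  \<open>2 (x \<circ> y) = 2 x \<cdot> y - [x,y] + {x,y}\<close>, so \<open>\<circ>\<close> is always bilinear and commutative.
  Expanding with axioms (ii), (iii) and the vanishing of all double brackets, the failure of
  \<open>x \<circ> -\<close> to be a derivation of \<open>n\<close> is \<open>({[x,y],z} + {y,[x,z]} - [x,{y,z}])/2\<close>,
  so the derivation axiom of a CPA-structure is exactly the first condition. Once that holds,
  the same expansion shows that \<open>{x,y} \<circ> z - x \<circ> (y \<circ> z) + y \<circ> (x \<circ> z)\<close> is the difference
  of the two sides of the second condition applied to \<open>z\<close>.
\<close>

lemma bilinear_prodD:
  assumes "bilinear_prod scale p"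
  shows "p (x + y) z = p x z + p y z" and "p x (y + z) = p x y + p x z"
    and "p (x - y) z = p x z - p y z" and "p x (y - z) = p x y - p x z"
    and "p (- x) z = - p x z" and "p x (- y) = - p x y"
    and "p (scale a x) y = scale a (p x y)" and "p x (scale a y) = scale a (p x y)"
proof -
  interpret left: additive "\<lambda>x. p x z" for z
    by standard (use assms in \<open>simp add: bilinear_prod_def\<close>)
  interpret right: additive "\<lambda>y. p x y" for x
    by standard (use assms in \<open>simp add: bilinear_prod_def\<close>)
  show "p (x + y) z = p x z + p y z" "p x (y + z) = p x y + p x z"
    "p (x - y) z = p x z - p y z" "p x (y - z) = p x y - p x z"
    "p (- x) z = - p x z" "p x (- y) = - p x y"
    by (simp_all add: left.add right.add left.diff right.diff left.minus right.minus)
  show "p (scale a x) y = scale a (p x y)" "p x (scale a y) = scale a (p x y)"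
    using assms by (simp_all add: bilinear_prod_def)
qed

lemma lie_algebra_antisym:
  assumes "lie_algebra scale br"
  shows "br y x = - br x y"
proof -
  have "br (x + y) (x + y) = 0" "br x x = 0" "br y y = 0"
    using assms by (simp_all add: lie_algebra_def)
  moreover have "bilinear_prod scale br"
    using assms by (simp add: lie_algebra_def)
  ultimately show ?thesis
    by (simp add: bilinear_prodD eq_neg_iff_add_eq_0 add.commute)
qed

lemma two_step_nilpotent_right:
  assumes "lie_algebra scale br" and "two_step_nilpotent br"
  shows "br x (br y z) = 0"
  using assms lie_algebra_antisym[OF assms(1), of x "br y z"]
  by (simp add: two_step_nilpotent_def)

locale PA_two_step_nilpotent = vector_space scale
  for scale :: "'k::field_char_0 \<Rightarrow> 'v::ab_group_add \<Rightarrow> 'v" +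
  fixes bg bn p :: "'v \<Rightarrow> 'v \<Rightarrow> 'v"
  assumes lie_bg: "lie_algebra scale bg" and lie_bn: "lie_algebra scale bn"
    and nilpotent_bg: "two_step_nilpotent bg" and nilpotent_bn: "two_step_nilpotent bn"
    and PA: "PA_structure scale bg bn p"
begin

lemmas bg_bilinear = bilinear_prodD[OF lie_bg[unfolded lie_algebra_def, THEN conjunct1]]
lemmas bn_bilinear = bilinear_prodD[OF lie_bn[unfolded lie_algebra_def, THEN conjunct1]]
lemmas p_bilinear = bilinear_prodD[OF PA[unfolded PA_structure_def, THEN conjunct1]]

lemma bg_bg_zero: "bg (bg x y) z = 0" "bg x (bg y z) = 0"
  using nilpotent_bg two_step_nilpotent_right[OF lie_bg nilpotent_bg]
  by (simp_all add: two_step_nilpotent_def)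

lemma bn_bn_zero: "bn (bn x y) z = 0" "bn x (bn y z) = 0"
  using nilpotent_bn two_step_nilpotent_right[OF lie_bn nilpotent_bn]
  by (simp_all add: two_step_nilpotent_def)

lemma p_bg_left: "p (bg x y) z = p x (p y z) - p y (p x z)"
  and p_bn_right: "p x (bn y z) = bn (p x y) z + bn y (p x z)"
  using PA by (simp_all add: PA_structure_def)

lemma p_swap: "p x y = p y x + bg x y - bn x y"
proof -
  have "p x y - p y x = bg x y - bn x y"
    using PA by (simp add: PA_structure_def)
  then show ?thesis
    by (simp add: algebra_simps)
qed

text \<open>Twice the product \<open>x \<circ> y\<close>; the identities for it need no scalar \<open>1/2\<close>.\<close>
definition sym_prod :: "'v \<Rightarrow> 'v \<Rightarrow> 'v" where
  "sym_prod x y = p x y + p y x"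

lemma sym_prod_bilinear: "bilinear_prod scale sym_prod"
  by (simp add: bilinear_prod_def sym_prod_def p_bilinear scale_right_distrib add_ac)

lemmas sym_prod_linear = bilinear_prodD[OF sym_prod_bilinear]

lemma sym_prod_eq: "sym_prod x y = p x y + p x y - bg x y + bn x y"
  by (simp add: sym_prod_def p_swap[of y x] lie_algebra_antisym[OF lie_bg, of x y]
      lie_algebra_antisym[OF lie_bn, of x y])

lemma sym_prod_derivation_defect:
  "sym_prod x (bn y z) - (bn (sym_prod x y) z + bn y (sym_prod x z))
     = bn (bg x y) z + bn y (bg x z) - bg x (bn y z)"
  by (simp add: sym_prod_eq p_bilinear bg_bilinear bn_bilinear p_bn_right bn_bn_zero algebra_simps)

lemma sym_prod_associator_defect:
  fixes x y z :: 'v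
  assumes bg_derivation: "\<And>x y z. bg x (bn y z) = bn (bg x y) z + bn y (bg x z)"
  defines "T \<equiv> (p (bn x y) z - p (bg x y) z) + (p (bn x y) z - p (bg x y) z)
    - (bg (bn x y) z + op_comm (bg y) (p x) z + op_comm (p y) (bg x) z)"
  shows "sym_prod (bn x y) z + sym_prod (bn x y) z
           - (sym_prod x (sym_prod y z) - sym_prod y (sym_prod x z)) = T + T"
  unfolding T_def op_comm_def
  by (simp add: sym_prod_eq p_bilinear bg_bilinear bn_bilinear p_bg_left p_bn_right
      bg_bg_zero bn_bn_zero bg_derivation p_swap[of y x] lie_algebra_antisym[OF lie_bg, of x y]
      algebra_simps)

lemma scale_half_double: "scale (1/2) (v + v) = v"
proof -
  have "scale (1/2) (v + v) = scale (1/2 + 1/2) v"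
    by (simp only: scale_right_distrib scale_left_distrib)
  then show ?thesis
    by simp
qed

definition cprod :: "'v \<Rightarrow> 'v \<Rightarrow> 'v" where
  "cprod x y = scale (1/2) (sym_prod x y)"

lemma cprod_derivation_defect:
  "cprod x (bn y z) - (bn (cprod x y) z + bn y (cprod x z))
     = scale (1/2) (bn (bg x y) z + bn y (bg x z) - bg x (bn y z))"
  by (simp add: cprod_def bn_bilinear flip: sym_prod_derivation_defect
      scale_right_distrib scale_right_diff_distrib)

lemma cprod_associator_defect:
  assumes "\<And>x y z. bg x (bn y z) = bn (bg x y) z + bn y (bg x z)"
  shows "cprod (bn x y) z - (cprod x (cprod y z) - cprod y (cprod x z))
    = p (bn x y) z - p (bg x y) z
      - scale (1/2) (bg (bn x y) z + op_comm (bg y) (p x) z + op_comm (p y) (bg x) z)"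
    (is "_ = ?A - scale (1/2) ?E")
proof -
  let ?S = "sym_prod (bn x y) z" and ?N = "sym_prod x (sym_prod y z) - sym_prod y (sym_prod x z)"
  have "cprod (bn x y) z - (cprod x (cprod y z) - cprod y (cprod x z))
      = scale (1/2) (scale (1/2) (?S + ?S)) - scale (1/2) (scale (1/2) ?N)"
    by (simp only: cprod_def sym_prod_linear(8) scale_half_double scale_right_diff_distrib)
  also have "\<dots> = scale (1/2) (scale (1/2) (?S + ?S - ?N))"
    by (simp only: scale_right_diff_distrib)
  also have "\<dots> = scale (1/2) (scale (1/2) (?A + ?A - ?E + (?A + ?A - ?E)))"
    by (simp only: sym_prod_associator_defect[OF assms])
  also have "\<dots> = ?A - scale (1/2) ?E"
    by (simp add: scale_half_double scale_right_diff_distrib)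
  finally show ?thesis .
qed

lemma cprod_bilinear: "bilinear_prod scale cprod"
  by (simp add: bilinear_prod_def cprod_def sym_prod_linear scale_right_distrib scale_left_commute)

lemma cprod_commute: "cprod x y = cprod y x"
  by (simp add: cprod_def sym_prod_def add.commute)

lemma cprod_derivation_iff:
  "(\<forall>x y z. cprod x (bn y z) = bn (cprod x y) z + bn y (cprod x z))
     \<longleftrightarrow> (\<forall>x y. op_comm (bg x) (bn y) = bn (bg x y))"
proof -
  have "cprod x (bn y z) = bn (cprod x y) z + bn y (cprod x z)
      \<longleftrightarrow> op_comm (bg x) (bn y) z = bn (bg x y) z" for x y z
  proof -
    have "cprod x (bn y z) = bn (cprod x y) z + bn y (cprod x z)
        \<longleftrightarrow> bn (bg x y) z + bn y (bg x z) - bg x (bn y z) = 0"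
      by (simp only: eq_iff_diff_eq_0[of "cprod x (bn y z)"] cprod_derivation_defect) simp
    also have "\<dots> \<longleftrightarrow> op_comm (bg x) (bn y) z = bn (bg x y) z"
      by (auto simp add: op_comm_def algebra_simps)
    finally show ?thesis .
  qed
  then show ?thesis
    by (simp add: fun_eq_iff)
qed

lemma cprod_associator_iff:
  assumes "\<forall>x y. op_comm (bg x) (bn y) = bn (bg x y)"
  shows "(\<forall>x y z. cprod (bn x y) z = cprod x (cprod y z) - cprod y (cprod x z))
    \<longleftrightarrow> (\<forall>x y. (\<lambda>z. p (bn x y) z - p (bg x y) z) =
       (\<lambda>z. scale (1/2) (bg (bn x y) z + op_comm (bg y) (p x) z + op_comm (p y) (bg x) z)))"
proof -
  have "bg x (bn y z) = bn (bg x y) z + bn y (bg x z)" for x y z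
    using assms by (simp add: op_comm_def fun_eq_iff algebra_simps)
  then have "cprod (bn x y) z = cprod x (cprod y z) - cprod y (cprod x z)
      \<longleftrightarrow> p (bn x y) z - p (bg x y) z
        = scale (1/2) (bg (bn x y) z + op_comm (bg y) (p x) z + op_comm (p y) (bg x) z)" for x y z
    using cprod_associator_defect by (metis right_minus_eq)
  then show ?thesis
    by (simp add: fun_eq_iff)
qed

theorem CPA_structure_cprod_iff:
  "CPA_structure scale bn cprod \<longleftrightarrow>
    (\<forall>x y. op_comm (bg x) (bn y) = bn (bg x y)) \<and>
    (\<forall>x y. (\<lambda>z. p (bn x y) z - p (bg x y) z) =
       (\<lambda>z. scale (1/2) (bg (bn x y) z + op_comm (bg y) (p x) z + op_comm (p y) (bg x) z)))"
  using cprod_bilinear cprod_commute cprod_derivation_iff cprod_associator_iff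
  by (auto simp add: CPA_structure_def)

end

theorem proposition4p6:
  fixes scale :: "'k::field_char_0 \<Rightarrow> 'v::ab_group_add \<Rightarrow> 'v"
    and Basis :: "'v set"
    and bg bn p :: "'v \<Rightarrow> 'v \<Rightarrow> 'v"
  assumes "finite_dimensional_vector_space scale Basis"
    and "lie_algebra scale bg" and "lie_algebra scale bn"
    and "two_step_nilpotent bg" and "two_step_nilpotent bn"
    and "PA_structure scale bg bn p"
  shows "CPA_structure scale bn (\<lambda>x y. scale (1/2) (p x y + p y x)) \<longleftrightarrow>
    ((\<forall>x y. op_comm (bg x) (bn y) = bn (bg x y)) \<and>
     (\<forall>x y. (\<lambda>z. p (bn x y) z - p (bg x y) z) =
            (\<lambda>z. scale (1/2) (bg (bn x y) z + op_comm (bg y) (p x) z + op_comm (p y) (bg x) z))))"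
proof -
  interpret PA_two_step_nilpotent scale bg bn p
    using assms by (simp add: PA_two_step_nilpotent_def PA_two_step_nilpotent_axioms_def
        finite_dimensional_vector_space_def)
  show ?thesis
    using CPA_structure_cprod_iff by (simp add: cprod_def[abs_def] sym_prod_def[abs_def])
qed

end
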